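(* Let $H$ be a graph and let $v_1,\dots,v_k$ be mutually distinct vertices of $H$. Then $\sigma=(v_1,\dots,v_k)$ is an lc-sequence for the set system $\mathcal{D}_H$ if and only if $\varphi=*_c v_1 *_c v_2\cdots *_c v_k$ is an lc-sequence for $H$. Moreover, in this case, $\sigma$ is full if and only if $\varphi$ is full.
   Context: Graphs are finite, may have loops, but no multiple edges. A vertex is isolated if no edge (including a loop) is incident to it. For $v\in V(H)$, $N_H(v)=\{u\neq v: \{u,v\}\in E(H)\}$. For a looped vertex $v$, the local complement $H*v$ is the graph on $V(H)$ such that for every $p\subseteq V(H)$ with $|p|\in\{1,2\}$: $p\in E(H*v)$ iff either ($p\notin E(H)$ and $p\subseteq N_H(v)$) or ($p\in E(H)$ and $p\not\subseteq N_H(v)$). $H*_c v$ (only for looped $v$) is obtained from $H*v$ by removing all edges incident to $v$, including its loop. $\varphi=*_c v_1\cdots *_c v_k$ (applied left to right) is an lc-sequence for $H$ if $v_i$ is looped in $H*_c v_1\cdots*_c v_{i-1}$ for every $i$; it is full if $H\varphi$ consists only of isolated vertices. The adjacency matrix $A(H)$ is over $GF(2)$ with diagonal entry $1$ exactly at looped vertices; $H[X]$ is the induced subgraph on $X$. $\mathcal{D}_H=(V(H),S)$ with $X\in S$ iff $A(H[X])$ is invertible (the empty matrix counts as invertible). For a set system $D=(V,S)$, a sequence $(v_1,\dots,v_k)$ of mutually distinct elements of $V$ is an lc-sequence for $D$ if $\{v_1,\dots,v_i\}\in S$ for all $i\in\{0,\dots,k\}$; it is full if moreover $\{v_1,\dots,v_k\}$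 is an inclusion-maximal element of $S$. *)

theory Defs
  imports Main "HOL-Library.Z2"
begin

text \<open>A graph (loops allowed, no multiple edges) is given by a finite vertex set V and
an edge set E of subsets of V of cardinality 1 (loops) or 2.\<close>

definition is_graph :: "'a set \<Rightarrow> 'a set set \<Rightarrow> bool" where
  "is_graph V E \<longleftrightarrow> finite V \<and> (\<forall>e\<in>E. e \<subseteq> V \<and> (card e = 1 \<or> card e = 2))"

definition nbhd :: "'a set set \<Rightarrow> 'a \<Rightarrow> 'a set" where
  "nbhd E v = {u. u \<noteq> v \<and> {u, v} \<in> E}"

definition looped :: "'a set set \<Rightarrow> 'a \<Rightarrow> bool" where
  "looped E v \<longleftrightarrow> {v} \<in> E"

definition local_compl :: "'a set \<Rightarrow> 'a set set \<Rightarrow> 'a \<Rightarrow> 'a set set" where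
  "local_compl V E v = {p. p \<subseteq> V \<and> (card p = 1 \<or> card p = 2) \<and>
     ((p \<notin> E \<and> p \<subseteq> nbhd E v) \<or> (p \<in> E \<and> \<not> p \<subseteq> nbhd E v))}"

definition local_compl_c :: "'a set \<Rightarrow> 'a set set \<Rightarrow> 'a \<Rightarrow> 'a set set" where
  "local_compl_c V E v = {p \<in> local_compl V E v. v \<notin> p}"

fun apply_lcc :: "'a set \<Rightarrow> 'a set set \<Rightarrow> 'a list \<Rightarrow> 'a set set" where
  "apply_lcc V E [] = E"
| "apply_lcc V E (v # vs) = apply_lcc V (local_compl_c V E v) vs"

fun is_lc_seq_graph :: "'a set \<Rightarrow> 'a set set \<Rightarrow> 'a list \<Rightarrow> bool" where
  "is_lc_seq_graph V E [] = True"
| "is_lc_seq_graph V E (v # vs) \<longleftrightarrow> looped E v \<and> is_lc_seq_graph V (local_compl_c V E v) vs"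

definition full_lc_seq_graph :: "'a set \<Rightarrow> 'a set set \<Rightarrow> 'a list \<Rightarrow> bool" where
  "full_lc_seq_graph V E vs \<longleftrightarrow> is_lc_seq_graph V E vs \<and>
     (\<forall>u\<in>V. \<forall>e\<in>apply_lcc V E vs. u \<notin> e)"

definition adj :: "'a set set \<Rightarrow> 'a \<Rightarrow> 'a \<Rightarrow> bit" where
  "adj E x y = (if {x, y} \<in> E then 1 else 0)"

text \<open>A square matrix indexed by the finite set X is invertible if it has a two-sided inverse
(the empty matrix is invertible).\<close>
definition invertible_on :: "'a set \<Rightarrow> ('a \<Rightarrow> 'a \<Rightarrow> 'f::field) \<Rightarrow> bool" where
  "invertible_on X A \<longleftrightarrow> (\<exists>B. \<forall>i\<in>X. \<forall>j\<in>X.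
      (\<Sum>k\<in>X. A i k * B k j) = (if i = j then 1 else 0) \<and>
      (\<Sum>k\<in>X. B i k * A k j) = (if i = j then 1 else 0))"

text \<open>The set system D_H = (V, S): S = {X \<subseteq> V. A(H[X]) invertible}.
  A(H[X]) is the restriction of adj E to X \<times> X.\<close>
definition DH_sets :: "'a set \<Rightarrow> 'a set set \<Rightarrow> 'a set set" where
  "DH_sets V E = {X. X \<subseteq> V \<and> invertible_on X (adj E)}"

definition is_lc_seq_sys :: "'a set \<Rightarrow> 'a set set \<Rightarrow> 'a list \<Rightarrow> bool" where
  "is_lc_seq_sys V S vs \<longleftrightarrow> distinct vs \<and> set vs \<subseteq> V \<and>
     (\<forall>i\<le>length vs. set (take i vs) \<in> S)"

definition full_lc_seq_sys :: "'a set \<Rightarrow> 'a set set \<Rightarrow> 'a list \<Rightarrow> bool" where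
  "full_lc_seq_sys V S vs \<longleftrightarrow> is_lc_seq_sys V S vs \<and>
     set vs \<in> S \<and> (\<forall>Y\<in>S. set vs \<subseteq> Y \<longrightarrow> Y = set vs)"

end

theory Submission
  imports Defs
begin

text \<open>Over GF(2), the Schur complement of a looped vertex v in the adjacency matrix of H is
the adjacency matrix of H *_c v on the remaining vertices: the entry at {x, y} flips exactly when
x and y are both neighbours of v. As A[insert v Y] with A v v = 1 is invertible iff its Schur
complement on Y is, induction along the sequence shows that for X disjoint from {v1, ..., vk},
A(H)[X \<union> {v1, ..., vk}] is invertible iff A(H\<phi>)[X] is. With X = {} this matches the two notions
of lc-sequence. Maximality of {v1, ..., vk} in D_H then says that H\<phi> has no nonempty invertible
induced subgraph, i.e. no edge, because every edge contains a looped vertex or spans an invertible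
unlooped pair.\<close>

definition mat_mult_on :: "'a set \<Rightarrow> ('a \<Rightarrow> 'a \<Rightarrow> 'f::comm_ring_1) \<Rightarrow> ('a \<Rightarrow> 'a \<Rightarrow> 'f) \<Rightarrow> 'a \<Rightarrow> 'a \<Rightarrow> 'f"
  where "mat_mult_on X A B i j = (\<Sum>k\<in>X. A i k * B k j)"

lemma invertible_on_iff_mat_mult_on:
  "invertible_on X A \<longleftrightarrow> (\<exists>B. \<forall>i\<in>X. \<forall>j\<in>X.
      mat_mult_on X A B i j = (if i = j then 1 else 0) \<and> mat_mult_on X B A i j = (if i = j then 1 else 0))"
  by (simp add: invertible_on_def mat_mult_on_def)

lemma mat_mult_on_assoc:
  "mat_mult_on X (mat_mult_on X A B) C = mat_mult_on X A (mat_mult_on X B C)"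
proof (intro ext)
  fix i j
  have "mat_mult_on X (mat_mult_on X A B) C i j = (\<Sum>k\<in>X. \<Sum>l\<in>X. A i l * B l k * C k j)"
    by (simp add: mat_mult_on_def sum_distrib_right)
  also have "\<dots> = (\<Sum>l\<in>X. \<Sum>k\<in>X. A i l * (B l k * C k j))"
    by (subst sum.swap) (simp add: mult.assoc)
  also have "\<dots> = mat_mult_on X A (mat_mult_on X B C) i j"
    by (simp add: mat_mult_on_def sum_distrib_left)
  finally show "mat_mult_on X (mat_mult_on X A B) C i j = mat_mult_on X A (mat_mult_on X B C) i j" .
qed

lemma mat_mult_on_cong:
  assumes "\<And>k. k \<in> X \<Longrightarrow> A i k = A' i k" and "\<And>k. k \<in> X \<Longrightarrow> B k j = B' k j"
  shows "mat_mult_on X A B i j = mat_mult_on X A' B' i j"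
  using assms by (simp add: mat_mult_on_def)

lemma mat_mult_on_one_left:
  assumes "finite X" "i \<in> X" "\<And>k. k \<in> X \<Longrightarrow> I i k = (if i = k then 1 else 0)"
  shows "mat_mult_on X I B i j = B i j"
proof -
  have "mat_mult_on X I B i j = (\<Sum>k\<in>X. (if i = k then 1 else 0) * B k j)"
    using assms(3) by (simp add: mat_mult_on_def)
  also have "\<dots> = B i j"
    using assms(1,2) by (simp add: if_distrib[where f="\<lambda>a. a * _"] cong: if_cong)
  finally show ?thesis .
qed

lemma mat_mult_on_one_right:
  assumes "finite X" "j \<in> X" "\<And>k. k \<in> X \<Longrightarrow> I k j = (if k = j then 1 else 0)"
  shows "mat_mult_on X A I i j = A i j"
proof -
  have "mat_mult_on X A I i j = (\<Sum>k\<in>X. A i k * (if k = j then 1 else 0))"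
    using assms(3) by (simp add: mat_mult_on_def)
  also have "\<dots> = A i j"
    using assms(1,2) by (simp add: if_distrib[where f="\<lambda>a. _ * a"] cong: if_cong)
  finally show ?thesis .
qed

lemma invertible_on_cong:
  assumes "\<And>i j. i \<in> X \<Longrightarrow> j \<in> X \<Longrightarrow> A i j = A' i j"
  shows "invertible_on X A \<longleftrightarrow> invertible_on X A'"
  unfolding invertible_on_def using assms by (simp cong: sum.cong)

lemma invertible_on_mult_on:
  assumes "finite X" "invertible_on X A" "invertible_on X B"
  shows "invertible_on X (mat_mult_on X A B)"
proof -
  obtain A' where A': "\<forall>i\<in>X. \<forall>j\<in>X. mat_mult_on X A A' i j = (if i = j then 1 else 0)
      \<and> mat_mult_on X A' A i j = (if i = j then 1 else 0)"
    using assms(2) unfolding invertible_on_iff_mat_mult_on by blast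
  obtain B' where B': "\<forall>i\<in>X. \<forall>j\<in>X. mat_mult_on X B B' i j = (if i = j then 1 else 0)
      \<and> mat_mult_on X B' B i j = (if i = j then 1 else 0)"
    using assms(3) unfolding invertible_on_iff_mat_mult_on by blast
  have AB: "mat_mult_on X (mat_mult_on X A B) (mat_mult_on X B' A') i j = mat_mult_on X A A' i j"
    if "j \<in> X" for i j
  proof -
    have "mat_mult_on X (mat_mult_on X A B) (mat_mult_on X B' A') i j
        = mat_mult_on X A (mat_mult_on X (mat_mult_on X B B') A') i j"
      by (simp only: mat_mult_on_assoc)
    also have "\<dots> = mat_mult_on X A A' i j"
      by (rule mat_mult_on_cong) (use B' assms(1) in \<open>simp_all add: mat_mult_on_one_left\<close>)
    finally show ?thesis .
  qed
  have BA: "mat_mult_on X (mat_mult_on X B' A') (mat_mult_on X A B) i j = mat_mult_on X B' B i j"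
    if "j \<in> X" for i j
  proof -
    have "mat_mult_on X (mat_mult_on X B' A') (mat_mult_on X A B) i j
        = mat_mult_on X B' (mat_mult_on X (mat_mult_on X A' A) B) i j"
      by (simp only: mat_mult_on_assoc)
    also have "\<dots> = mat_mult_on X B' B i j"
      by (rule mat_mult_on_cong) (use A' assms(1) in \<open>simp_all add: mat_mult_on_one_left\<close>)
    finally show ?thesis .
  qed
  show ?thesis
    unfolding invertible_on_iff_mat_mult_on
  proof (intro exI[of _ "mat_mult_on X B' A'"] ballI conjI)
    fix i j assume "i \<in> X" "j \<in> X"
    then show "mat_mult_on X (mat_mult_on X A B) (mat_mult_on X B' A') i j = (if i = j then 1 else 0)"
      and "mat_mult_on X (mat_mult_on X B' A') (mat_mult_on X A B) i j = (if i = j then 1 else 0)"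
      using AB BA A' B' by simp_all
  qed
qed

lemma invertible_on_mult_on_left_iff:
  assumes "finite X" "invertible_on X L"
  shows "invertible_on X (mat_mult_on X L A) \<longleftrightarrow> invertible_on X A"
proof
  obtain L' where L': "\<forall>i\<in>X. \<forall>j\<in>X. mat_mult_on X L L' i j = (if i = j then 1 else 0)
      \<and> mat_mult_on X L' L i j = (if i = j then 1 else 0)"
    using assms(2) unfolding invertible_on_iff_mat_mult_on by blast
  have "invertible_on X L'"
    unfolding invertible_on_iff_mat_mult_on using L' by (intro exI[of _ L]) simp
  moreover assume "invertible_on X (mat_mult_on X L A)"
  ultimately have "invertible_on X (mat_mult_on X L' (mat_mult_on X L A))"
    by (rule invertible_on_mult_on[OF assms(1)])
  moreover have "mat_mult_on X L' (mat_mult_on X L A) i j = A i j" if "i \<in> X" for i j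
  proof -
    have "mat_mult_on X L' (mat_mult_on X L A) i j = mat_mult_on X (mat_mult_on X L' L) A i j"
      by (simp only: mat_mult_on_assoc)
    also have "\<dots> = A i j"
      by (rule mat_mult_on_one_left) (use L' assms(1) that in auto)
    finally show ?thesis .
  qed
  ultimately show "invertible_on X A"
    using invertible_on_cong[of X "mat_mult_on X L' (mat_mult_on X L A)" A] by simp
next
  assume "invertible_on X A"
  then show "invertible_on X (mat_mult_on X L A)"
    by (rule invertible_on_mult_on[OF assms])
qed

lemma invertible_on_unit_column_restrict:
  fixes M :: "'a \<Rightarrow> 'a \<Rightarrow> 'f::field"
  assumes fin: "finite Y" and v: "v \<notin> Y" and col: "\<And>i. i \<in> Y \<Longrightarrow> M i v = 0"
    and diag: "M v v = 1" and inv: "invertible_on (insert v Y) M"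
  shows "invertible_on Y M"
proof -
  obtain N where N: "\<forall>i\<in>insert v Y. \<forall>j\<in>insert v Y.
      (\<Sum>k\<in>insert v Y. M i k * N k j) = (if i = j then 1 else 0) \<and>
      (\<Sum>k\<in>insert v Y. N i k * M k j) = (if i = j then 1 else 0)"
    using inv unfolding invertible_on_def by blast
  have Nv: "N i v = 0" if "i \<in> Y" for i
    using N[rule_format, of i v] that fin v col diag by (auto cong: sum.cong)
  show ?thesis
    unfolding invertible_on_def
  proof (intro exI[of _ N] ballI conjI)
    fix i j assume "i \<in> Y" "j \<in> Y"
    then show "(\<Sum>k\<in>Y. M i k * N k j) = (if i = j then 1 else 0)"
      and "(\<Sum>k\<in>Y. N i k * M k j) = (if i = j then 1 else 0)"
      using N[rule_format, of i j] fin v col Nv by auto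
  qed
qed

lemma invertible_on_unit_column_extend:
  fixes M :: "'a \<Rightarrow> 'a \<Rightarrow> 'f::field"
  assumes fin: "finite Y" and v: "v \<notin> Y" and col: "\<And>i. i \<in> Y \<Longrightarrow> M i v = 0"
    and diag: "M v v = 1" and inv: "invertible_on Y M"
  shows "invertible_on (insert v Y) M"
proof -
  obtain T where T: "\<forall>i\<in>Y. \<forall>j\<in>Y. mat_mult_on Y M T i j = (if i = j then 1 else 0)
      \<and> mat_mult_on Y T M i j = (if i = j then 1 else 0)"
    using inv unfolding invertible_on_iff_mat_mult_on by blast
  \<comment> \<open>With r the row v of M on Y, M is the block matrix [[1, r], [0, M on Y]], with inverse
    [[1, -r T], [0, T]].\<close>
  define N where "N i j = (if i = v then (if j = v then 1 else - mat_mult_on Y M T v j)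
      else if j = v then 0 else T i j)" for i j
  have row_v: "mat_mult_on Y (mat_mult_on Y M T) M v j = M v j" if "j \<in> Y" for j
  proof -
    have "mat_mult_on Y (mat_mult_on Y M T) M v j = mat_mult_on Y M (mat_mult_on Y T M) v j"
      by (simp only: mat_mult_on_assoc)
    also have "\<dots> = M v j"
      by (rule mat_mult_on_one_right) (use T fin that in auto)
    finally show ?thesis .
  qed
  have ne_v: "k \<noteq> v" if "k \<in> Y" for k
    using v that by blast
  show ?thesis
    unfolding invertible_on_iff_mat_mult_on
  proof (intro exI[of _ N] ballI conjI)
    fix i j assume i: "i \<in> insert v Y" and j: "j \<in> insert v Y"
    have "mat_mult_on (insert v Y) M N i j = M i v * N v j + mat_mult_on Y M N i j"
      using fin v by (simp add: mat_mult_on_def)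
    moreover have "mat_mult_on Y M N i j = (if j = v then 0 else mat_mult_on Y M T i j)"
      by (simp add: mat_mult_on_def N_def ne_v cong: sum.cong)
    ultimately show "mat_mult_on (insert v Y) M N i j = (if i = j then 1 else 0)"
      using i j T col diag v by (auto simp: N_def)
    have "mat_mult_on (insert v Y) N M i j = N i v * M v j + mat_mult_on Y N M i j"
      using fin v by (simp add: mat_mult_on_def)
    moreover have "mat_mult_on Y N M i j = (if i = v then - mat_mult_on Y (mat_mult_on Y M T) M v j
        else mat_mult_on Y T M i j)"
      by (simp add: mat_mult_on_def N_def ne_v sum_negf cong: sum.cong)
    moreover have "mat_mult_on Y P M i v = 0" for P
      using col by (simp add: mat_mult_on_def)
    ultimately show "mat_mult_on (insert v Y) N M i j = (if i = j then 1 else 0)"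
      using i j T diag v row_v by (auto simp: N_def)
  qed
qed

definition col_shear :: "'a \<Rightarrow> ('a \<Rightarrow> 'f::comm_ring_1) \<Rightarrow> 'a \<Rightarrow> 'a \<Rightarrow> 'f" where
  "col_shear v c i j = (if i = j then 1 else if j = v then c i else 0)"

lemma mat_mult_on_col_shear:
  assumes "finite X" "i \<in> X" "v \<in> X"
  shows "mat_mult_on X (col_shear v c) A i j = A i j + (if i = v then 0 else c i * A v j)"
proof -
  have "col_shear v c i k * A k j
      = (if k = i then A k j else 0) + (if k = v \<and> i \<noteq> v then c i * A v j else 0)" for k
    by (auto simp: col_shear_def)
  then show ?thesis
    using assms by (simp add: mat_mult_on_def sum.distrib sum.delta)
qed

lemma invertible_on_col_shear:
  fixes c :: "'a \<Rightarrow> 'f::field"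
  assumes "finite X" "v \<in> X"
  shows "invertible_on X (col_shear v c)"
  unfolding invertible_on_iff_mat_mult_on
  by (intro exI[of _ "col_shear v (\<lambda>i. - c i)"])
    (simp add: mat_mult_on_col_shear assms col_shear_def)

lemma invertible_on_insert_iff_schur_complement:
  fixes A :: "'a \<Rightarrow> 'a \<Rightarrow> 'f::field"
  assumes fin: "finite Y" and v: "v \<notin> Y" and diag: "A v v = 1"
  shows "invertible_on (insert v Y) A \<longleftrightarrow> invertible_on Y (\<lambda>i j. A i j - A i v * A v j)"
proof -
  \<comment> \<open>Clearing column v by row operations leaves the Schur complement on Y.\<close>
  let ?L = "col_shear v (\<lambda>i. - A i v)"
  let ?LA = "mat_mult_on (insert v Y) ?L A"
  have LA: "?LA i j = A i j - (if i = v then 0 else A i v * A v j)" if "i \<in> insert v Y" for i j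
    using fin that by (simp add: mat_mult_on_col_shear)
  have "invertible_on (insert v Y) A \<longleftrightarrow> invertible_on (insert v Y) ?LA"
    using fin by (simp add: invertible_on_mult_on_left_iff invertible_on_col_shear)
  also have "\<dots> \<longleftrightarrow> invertible_on Y ?LA"
  proof -
    have col: "?LA i v = 0" if "i \<in> Y" for i
      using LA that v diag by auto
    have "?LA v v = 1"
      using LA diag by simp
    then show ?thesis
      using invertible_on_unit_column_restrict[of Y v ?LA, OF fin v col]
        invertible_on_unit_column_extend[of Y v ?LA, OF fin v col]
      by blast
  qed
  also have "\<dots> \<longleftrightarrow> invertible_on Y (\<lambda>i j. A i j - A i v * A v j)"
    using v LA by (intro invertible_on_cong) auto
  finally show ?thesis .
qed

lemma invertible_on_empty: "invertible_on {} A"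
  by (simp add: invertible_on_def)

lemma invertible_on_singleton_iff:
  fixes A :: "'a \<Rightarrow> 'a \<Rightarrow> 'f::field"
  shows "invertible_on {x} A \<longleftrightarrow> A x x \<noteq> 0"
proof
  assume "invertible_on {x} A"
  then obtain B where "A x x * B x x = 1"
    unfolding invertible_on_def by auto
  then show "A x x \<noteq> 0" by auto
next
  assume "A x x \<noteq> 0"
  then show "invertible_on {x} A"
    unfolding invertible_on_def by (intro exI[of _ "\<lambda>_ _. inverse (A x x)"]) simp
qed

lemma invertible_on_zero_iff: "invertible_on X (\<lambda>_ _. 0 :: 'f::field) \<longleftrightarrow> X = {}"
  by (auto simp: invertible_on_def)

lemma adj_eq_1_iff_looped: "adj E v v = 1 \<longleftrightarrow> looped E v"
  by (simp add: adj_def looped_def)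

lemma is_graph_local_compl_c: "is_graph V E \<Longrightarrow> is_graph V (local_compl_c V E v)"
  unfolding is_graph_def local_compl_c_def local_compl_def by auto

lemma is_graph_apply_lcc: "is_graph V E \<Longrightarrow> is_graph V (apply_lcc V E vs)"
  by (induction vs arbitrary: E) (simp_all add: is_graph_local_compl_c)

lemma adj_local_compl_c:
  assumes g: "is_graph V E" and "x \<noteq> v" "y \<noteq> v"
  shows "adj (local_compl_c V E v) x y = adj E x y - adj E x v * adj E v y"
proof -
  have "card {x, y} = 1 \<or> card {x, y} = 2"
    by (cases "x = y") auto
  moreover have "{x, y} \<subseteq> nbhd E v \<longleftrightarrow> {x, v} \<in> E \<and> {v, y} \<in> E"
    using assms by (auto simp: nbhd_def insert_commute)
  moreover have "{x, y} \<subseteq> V" if "{x, y} \<in> E \<or> {x, v} \<in> E \<and> {v, y} \<in> E"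
    using g that unfolding is_graph_def by blast
  ultimately have "{x, y} \<in> local_compl_c V E v \<longleftrightarrow> ({x, y} \<in> E \<longleftrightarrow> \<not> ({x, v} \<in> E \<and> {v, y} \<in> E))"
    using assms unfolding local_compl_c_def local_compl_def by auto
  then show ?thesis
    unfolding adj_def by auto
qed

lemma invertible_on_insert_iff_local_compl_c:
  assumes g: "is_graph V E" and "looped E v" "finite X" "v \<notin> X"
  shows "invertible_on (insert v X) (adj E) \<longleftrightarrow> invertible_on X (adj (local_compl_c V E v))"
proof -
  have "invertible_on (insert v X) (adj E)
      \<longleftrightarrow> invertible_on X (\<lambda>i j. adj E i j - adj E i v * adj E v j)"
    using assms by (simp add: invertible_on_insert_iff_schur_complement adj_eq_1_iff_looped)
  also have "\<dots> \<longleftrightarrow> invertible_on X (adj (local_compl_c V E v))"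
  proof (rule invertible_on_cong)
    fix i j assume "i \<in> X" "j \<in> X"
    then have "i \<noteq> v" "j \<noteq> v"
      using assms(4) by auto
    then show "adj E i j - adj E i v * adj E v j = adj (local_compl_c V E v) i j"
      by (simp add: adj_local_compl_c[OF g])
  qed
  finally show ?thesis .
qed

lemma invertible_on_Un_iff_apply_lcc:
  assumes "is_graph V E" "is_lc_seq_graph V E vs" "distinct vs" "finite X" "X \<inter> set vs = {}"
  shows "invertible_on (X \<union> set vs) (adj E) \<longleftrightarrow> invertible_on X (adj (apply_lcc V E vs))"
  using assms
proof (induction vs arbitrary: E)
  case Nil
  then show ?case by simp
next
  case (Cons v vs)
  have "invertible_on (X \<union> set (v # vs)) (adj E) \<longleftrightarrow> invertible_on (insert v (X \<union> set vs)) (adj E)"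
    by simp
  also have "\<dots> \<longleftrightarrow> invertible_on (X \<union> set vs) (adj (local_compl_c V E v))"
    using Cons.prems by (intro invertible_on_insert_iff_local_compl_c) auto
  also have "\<dots> \<longleftrightarrow> invertible_on X (adj (apply_lcc V E (v # vs)))"
    using Cons.prems by (simp add: Cons.IH is_graph_local_compl_c)
  finally show ?case .
qed

lemma is_lc_seq_graph_iff_prefixes_invertible:
  assumes "is_graph V E" "distinct vs"
  shows "is_lc_seq_graph V E vs \<longleftrightarrow> (\<forall>i\<le>length vs. invertible_on (set (take i vs)) (adj E))"
  using assms
proof (induction vs arbitrary: E)
  case Nil
  then show ?case by (simp add: invertible_on_empty)
next
  case (Cons v vs)
  have prefixes: "(\<forall>i\<le>length (v # vs). invertible_on (set (take i (v # vs))) (adj E))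
      \<longleftrightarrow> (\<forall>i\<le>length vs. invertible_on (insert v (set (take i vs))) (adj E))"
    by (simp add: invertible_on_empty All_less_Suc2 flip: less_Suc_eq_le)
  show ?case
  proof (cases "looped E v")
    case True
    have "v \<notin> set (take i vs)" for i
      using Cons.prems(2) by (auto dest: in_set_takeD)
    then have "invertible_on (set (take i vs)) (adj (local_compl_c V E v))
        \<longleftrightarrow> invertible_on (insert v (set (take i vs))) (adj E)" for i
      using True Cons.prems(1) by (simp add: invertible_on_insert_iff_local_compl_c)
    moreover have "is_lc_seq_graph V E (v # vs) \<longleftrightarrow>
        (\<forall>i\<le>length vs. invertible_on (set (take i vs)) (adj (local_compl_c V E v)))"
      using True Cons.prems by (simp add: Cons.IH is_graph_local_compl_c)
    ultimately show ?thesis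
      unfolding prefixes by simp
  next
    case False
    then have "\<not> invertible_on (insert v (set (take 0 vs))) (adj E)"
      by (simp add: invertible_on_singleton_iff adj_def looped_def)
    then show ?thesis
      using False unfolding prefixes by auto
  qed
qed

lemma isolated_apply_lcc:
  assumes "\<forall>e\<in>E. u \<notin> e" "e \<in> apply_lcc V E vs"
  shows "u \<notin> e"
  using assms
proof (induction vs arbitrary: E)
  case (Cons v vs)
  have "\<forall>e\<in>local_compl_c V E v. u \<notin> e"
    using Cons.prems(1) unfolding local_compl_c_def local_compl_def nbhd_def by auto
  then show ?case
    using Cons by simp
qed simp

lemma isolated_apply_lcc_of_mem:
  assumes "u \<in> set vs" "e \<in> apply_lcc V E vs"
  shows "u \<notin> e"
  using assms
proof (induction vs arbitrary: E)
  case (Cons v vs)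
  show ?case
  proof (cases "u = v")
    case True
    then have "\<forall>e\<in>local_compl_c V E v. u \<notin> e"
      unfolding local_compl_c_def by auto
    then show ?thesis
      using Cons.prems(2) isolated_apply_lcc by fastforce
  next
    case False
    then show ?thesis
      using Cons by simp
  qed
qed simp

lemma is_graph_edgeless_iff:
  assumes "is_graph V E"
  shows "(\<forall>u\<in>V. \<forall>e\<in>E. u \<notin> e) \<longleftrightarrow> E = {}"
proof -
  have "e \<noteq> {} \<and> e \<subseteq> V" if "e \<in> E" for e
    using assms that unfolding is_graph_def by fastforce
  then show ?thesis
    by blast
qed

lemma invertible_on_subset_edge:
  assumes g: "is_graph V E" and e: "e \<in> E"
  obtains X where "X \<noteq> {}" "X \<subseteq> e" "invertible_on X (adj E)"
proof (cases "\<exists>x\<in>e. looped E x")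
  case True
  then obtain x where "x \<in> e" "looped E x"
    by blast
  then show ?thesis
    using that[of "{x}"] by (simp add: invertible_on_singleton_iff adj_def looped_def)
next
  case False
  have "card e = 1 \<or> card e = 2"
    using g e unfolding is_graph_def by blast
  moreover have "card e \<noteq> 1"
    using False e by (auto simp: card_1_singleton_iff looped_def)
  ultimately obtain x y where xy: "e = {x, y}" "x \<noteq> y"
    by (auto simp: card_2_iff)
  have "invertible_on {x, y} (adj E)"
    unfolding invertible_on_def
    by (rule exI[of _ "adj E"]) (use False e xy in \<open>auto simp: adj_def looped_def insert_commute\<close>)
  then show ?thesis
    using that[of "{x, y}"] xy by simp
qed

lemma maximal_DH_set_iff_apply_lcc_empty:
  assumes g: "is_graph V E" and "is_lc_seq_graph V E vs" "distinct vs" "set vs \<subseteq> V"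
  shows "(\<forall>Y\<in>DH_sets V E. set vs \<subseteq> Y \<longrightarrow> Y = set vs) \<longleftrightarrow> apply_lcc V E vs = {}"
proof -
  let ?F = "apply_lcc V E vs"
  have extension: "X \<union> set vs \<in> DH_sets V E \<longleftrightarrow> invertible_on X (adj ?F)"
    if "X \<subseteq> V" "X \<inter> set vs = {}" for X
  proof -
    have "finite X"
      using g that(1) finite_subset unfolding is_graph_def by blast
    moreover have "X \<union> set vs \<subseteq> V"
      using that(1) assms(4) by blast
    ultimately show ?thesis
      unfolding DH_sets_def using invertible_on_Un_iff_apply_lcc[OF assms(1-3) _ that(2)] by simp
  qed
  show ?thesis
  proof
    assume maximal: "\<forall>Y\<in>DH_sets V E. set vs \<subseteq> Y \<longrightarrow> Y = set vs"
    show "?F = {}"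
    proof (rule ccontr)
      assume "?F \<noteq> {}"
      then obtain e where e: "e \<in> ?F"
        by blast
      have gF: "is_graph V ?F"
        using g by (rule is_graph_apply_lcc)
      obtain X where X: "X \<noteq> {}" "X \<subseteq> e" "invertible_on X (adj ?F)"
        using invertible_on_subset_edge[OF gF e] by blast
      have "X \<subseteq> V"
        using gF e X(2) unfolding is_graph_def by blast
      moreover have disjoint: "X \<inter> set vs = {}"
        using X(2) isolated_apply_lcc_of_mem[OF _ e] by blast
      ultimately have "X \<union> set vs \<in> DH_sets V E"
        using extension X(3) by blast
      then have "X \<union> set vs = set vs"
        using maximal by blast
      then show False
        using X(1) disjoint by blast
    qed
  next
    assume "?F = {}"
    then have adj_F: "adj ?F = (\<lambda>_ _. 0)"
      by (simp add: adj_def fun_eq_iff)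
    have no_extension: "X = {}"
      if "X \<subseteq> V" "X \<inter> set vs = {}" "X \<union> set vs \<in> DH_sets V E" for X
      using extension[OF that(1,2)] that(3) by (simp add: adj_F invertible_on_zero_iff)
    show "\<forall>Y\<in>DH_sets V E. set vs \<subseteq> Y \<longrightarrow> Y = set vs"
    proof (intro ballI impI)
      fix Y assume Y: "Y \<in> DH_sets V E" "set vs \<subseteq> Y"
      have "Y - set vs = {}"
        using Y by (intro no_extension[of "Y - set vs"]) (auto simp: DH_sets_def Un_absorb2)
      then show "Y = set vs"
        using Y(2) by blast
    qed
  qed
qed

theorem mainTheorem8:
  fixes V :: "'a set" and E :: "'a set set" and vs :: "'a list"
  assumes "is_graph V E"
    and "distinct vs"
    and "set vs \<subseteq> V"
  shows "(is_lc_seq_sys V (DH_sets V E) vs \<longleftrightarrow> is_lc_seq_graph V E vs)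
    \<and> (is_lc_seq_graph V E vs \<longrightarrow>
         (full_lc_seq_sys V (DH_sets V E) vs \<longleftrightarrow> full_lc_seq_graph V E vs))"
proof (intro conjI impI)
  have "set (take i vs) \<subseteq> V" for i
    using assms(3) set_take_subset by fastforce
  then show lc_iff: "is_lc_seq_sys V (DH_sets V E) vs \<longleftrightarrow> is_lc_seq_graph V E vs"
    using assms by (auto simp: is_lc_seq_sys_def DH_sets_def is_lc_seq_graph_iff_prefixes_invertible)
  assume lc: "is_lc_seq_graph V E vs"
  then have "set vs \<in> DH_sets V E"
    using lc_iff unfolding is_lc_seq_sys_def by (metis order_refl take_all)
  then show "full_lc_seq_sys V (DH_sets V E) vs \<longleftrightarrow> full_lc_seq_graph V E vs"
    using assms lc lc_iff is_graph_edgeless_iff[OF is_graph_apply_lcc[OF assms(1)]]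
    by (simp add: full_lc_seq_sys_def full_lc_seq_graph_def maximal_DH_set_iff_apply_lcc_empty)
qed

end
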